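(* If $\nu>-1$ and $a,b\in[0,j_{\nu+1,1}]$, then $$|\mathcal{J}_\nu(a)-\mathcal{J}_\nu(b)|\ge |a-b|\sqrt{\mathcal{J}_\nu'(a)\,\mathcal{J}_\nu'(b)}.$$
   Context: For $\nu>-1$ define $\mathcal{J}_\nu:\mathbb{R}\to(-\infty,1]$ by $\mathcal{J}_\nu(x)=\sum_{n\ge0}\frac{(-1/4)^n}{(\nu+1)_n\, n!}x^{2n}$, equivalently $\mathcal{J}_\nu(x)=2^\nu\Gamma(\nu+1)x^{-\nu}J_\nu(x)$ for $x>0$, where $J_\nu$ is the Bessel function of the first kind and $(a)_n$ is the Pochhammer symbol. $j_{\mu,1}$ denotes the first positive zero of $J_\mu$. *)

theory Defs
  imports "HOL-Analysis.Analysis"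
begin

definition normBessel :: "real \<Rightarrow> real \<Rightarrow> real" where
  "normBessel nu x = (\<Sum>n. (-1/4) ^ n / (pochhammer (nu + 1) n * fact n) * x ^ (2 * n))"

definition besselJ :: "real \<Rightarrow> real \<Rightarrow> real" where
  "besselJ mu x = (\<Sum>n. (-1) ^ n / (fact n * Gamma (real n + mu + 1)) * (x / 2) powr (2 * real n + mu))"

definition first_bessel_zero :: "real \<Rightarrow> real" where
  "first_bessel_zero mu = Inf {x. x > 0 \<and> besselJ mu x = 0}"

end

theory Submission
  imports Defs
begin

text \<open>Write \<open>\<J>\<^sub>\<nu>\<close> for \<open>normBessel \<nu>\<close>. Then \<open>h = -\<J>\<^sub>\<nu>' = x \<J>\<^bsub>\<nu>+1\<^esub>(x) / (2(\<nu>+1))\<close>,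
  and for \<open>a < b\<close> the claim says that \<open>\<J>\<^sub>\<nu>(a) - \<J>\<^sub>\<nu>(b) = \<integral>\<^sub>a\<^sup>b h\<close> is at least \<open>(b - a) \<surd>(h(a) h(b))\<close>.
  This holds for every nonnegative log-concave \<open>h\<close>: with \<open>m = (a+b)/2\<close> the product
  \<open>h(m+s) h(m-s)\<close> decreases in \<open>s\<close>, so \<open>\<surd>(h(a) h(b)) \<le> (h(m+s) + h(m-s))/2\<close> for all
  \<open>0 \<le> s \<le> (b-a)/2\<close>, and integrating in \<open>s\<close> gives the bound.

  Log-concavity of \<open>x \<J>\<^sub>\<mu>(x)\<close> below the first zero \<open>j\<^sub>\<mu>\<close> of \<open>J\<^sub>\<mu>\<close> (which is the first positive zero
  of \<open>\<J>\<^sub>\<mu>\<close>) reduces to monotonicity of \<open>x \<J>\<^bsub>\<mu>+1\<^esub>(x) / \<J>\<^sub>\<mu>(x)\<close>, i.e. to a Turan-type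
  inequality. Everything is driven by the first-order system
  \<open>\<J>\<^sub>\<mu>' = -x \<J>\<^bsub>\<mu>+1\<^esub> / (2(\<mu>+1))\<close>, \<open>x \<J>\<^bsub>\<mu>+1\<^esub>' = 2(\<mu>+1)(\<J>\<^sub>\<mu> - \<J>\<^bsub>\<mu>+1\<^esub>)\<close>: multiplying by a suitable
  power \<open>x\<^sup>p\<close> turns both the nonnegativity of \<open>\<J>\<^bsub>\<mu>+1\<^esub>\<close> on \<open>[0, j\<^sub>\<mu>]\<close> and the Turan-type
  inequality into statements about functions that vanish at \<open>0\<close> and increase.\<close>

lemma nonneg_if_no_root_before:
  fixes g :: "real \<Rightarrow> real"
  assumes "a \<le> b" "continuous_on {a..b} g" "g a > 0"
    and no_root: "\<And>z. a < z \<Longrightarrow> z < b \<Longrightarrow> g z \<noteq> 0"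
  shows "g b \<ge> 0"
proof (rule ccontr)
  assume "\<not> g b \<ge> 0"
  then obtain z where z: "a \<le> z" "z \<le> b" "g z = 0"
    using IVT2'[of g b 0 a] assms(1-3) by auto
  with assms(3) \<open>\<not> g b \<ge> 0\<close> have "a < z" "z < b"
    by (auto simp: le_less)
  with no_root z(3) show False by blast
qed

lemma continuous_on_if_derivatives:
  "(\<And>x. x \<in> S \<Longrightarrow> (f has_real_derivative f' x) (at x)) \<Longrightarrow> continuous_on S f"
  by (meson DERIV_isCont continuous_at_imp_continuous_on)

lemma nonneg_if_powr_weighted_increasing:
  fixes G D :: "real \<Rightarrow> real"
  assumes "q > 0" "isCont G 0" "x > 0"
    and deriv: "\<And>s. 0 < s \<Longrightarrow> s \<le> x \<Longrightarrow> ((\<lambda>s. s powr q * G s) has_real_derivative D s) (at s)"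
    and nonneg: "\<And>s. 0 < s \<Longrightarrow> s < x \<Longrightarrow> D s \<ge> 0"
  shows "G x \<ge> 0"
proof -
  define R where "R = (\<lambda>s. s powr q * G s)"
  have "((\<lambda>s. s powr q) \<longlongrightarrow> 0) (at_right 0)"
    using \<open>q > 0\<close> by (intro tendsto_zero_powrI[of _ _ "\<lambda>_. q" q])
      (auto intro!: tendsto_ident_at eventually_at_rightI[of 0 1])
  moreover have "(G \<longlongrightarrow> G 0) (at_right 0)"
    using assms(2) by (simp add: isCont_def filterlim_at_split)
  ultimately have "(R \<longlongrightarrow> 0) (at_right 0)"
    unfolding R_def using tendsto_mult by fastforce
  moreover have "\<forall>\<^sub>F s in at_right 0. R s \<le> R x"
    using eventually_at_right_real[OF \<open>x > 0\<close>]
  proof eventually_elim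
    case (elim s)
    show ?case
    proof (rule DERIV_nonneg_imp_increasing_open[of s x R])
      show "continuous_on {s..x} R"
        unfolding R_def using elim deriv by (intro continuous_on_if_derivatives[where f' = D]) auto
      show "\<exists>D. (R has_real_derivative D) (at t) \<and> D \<ge> 0" if "s < t" "t < x" for t
        unfolding R_def using deriv[of t] nonneg[of t] that elim by auto
    qed (use elim in simp)
  qed
  ultimately have "0 \<le> R x"
    by (intro tendsto_upperbound[where F = "at_right 0"]) auto
  moreover have "x powr q > 0" using \<open>x > 0\<close> by simp
  ultimately show ?thesis unfolding R_def by (simp add: zero_le_mult_iff)
qed

lemma log_concave_symmetric_product_antimono:
  fixes h h' :: "real \<Rightarrow> real"
  assumes deriv: "\<And>x. m - S \<le> x \<Longrightarrow> x \<le> m + S \<Longrightarrow> (h has_real_derivative h' x) (at x)"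
    and log_concave: "\<And>x y. m - S < y \<Longrightarrow> y \<le> x \<Longrightarrow> x < m + S \<Longrightarrow> h' x * h y \<le> h x * h' y"
    and "0 \<le> s" "s \<le> S"
  shows "h (m + S) * h (m - S) \<le> h (m + s) * h (m - s)"
proof -
  define P where "P = (\<lambda>s. h (m + s) * h (m - s))"
  have dP: "(P has_real_derivative h' (m + s) * h (m - s) - h (m + s) * h' (m - s)) (at s)"
    if "0 \<le> s" "s \<le> S" for s
    unfolding P_def using that
    by (auto intro!: derivative_eq_intros DERIV_chain2[where f = h, OF deriv])
  have "P S \<le> P s"
  proof (rule DERIV_nonpos_imp_decreasing_open[of s S P])
    show "continuous_on {s..S} P"
      using dP \<open>0 \<le> s\<close>
      by (intro continuous_on_if_derivatives[where f' = "\<lambda>s. h' (m + s) * h (m - s) - h (m + s) * h' (m - s)"]) auto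
    show "\<exists>D. (P has_real_derivative D) (at t) \<and> D \<le> 0" if "s < t" "t < S" for t
      using dP[of t] log_concave[of "m - t" "m + t"] that \<open>0 \<le> s\<close> by auto
  qed (use assms in simp)
  then show ?thesis unfolding P_def .
qed

lemma decrease_ge_geometric_mean_of_log_concave_slope:
  fixes f h h' :: "real \<Rightarrow> real"
  assumes "a \<le> b"
    and f_deriv: "\<And>x. a \<le> x \<Longrightarrow> x \<le> b \<Longrightarrow> (f has_real_derivative - h x) (at x)"
    and h_deriv: "\<And>x. a \<le> x \<Longrightarrow> x \<le> b \<Longrightarrow> (h has_real_derivative h' x) (at x)"
    and h_nonneg: "\<And>x. a \<le> x \<Longrightarrow> x \<le> b \<Longrightarrow> h x \<ge> 0"
    and log_concave: "\<And>x y. a < y \<Longrightarrow> y \<le> x \<Longrightarrow> x < b \<Longrightarrow> h' x * h y \<le> h x * h' y"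
  shows "(b - a) * sqrt (h a * h b) \<le> f a - f b"
proof -
  define m where "m = (a + b) / 2"
  define S where "S = (b - a) / 2"
  have a: "a = m - S" and b: "b = m + S" and "S \<ge> 0"
    using \<open>a \<le> b\<close> by (simp_all add: m_def S_def field_simps)
  define C where "C = sqrt (h a * h b)"
  define F where "F = (\<lambda>s. f (m - s) - f (m + s) - 2 * s * C)"
  have "F 0 \<le> F S"
  proof (rule DERIV_nonneg_imp_increasing_open[of 0 S F])
    have dF: "(F has_real_derivative h (m - s) + h (m + s) - 2 * C) (at s)"
      if "0 \<le> s" "s \<le> S" for s
      unfolding F_def using that a b
      by (auto intro!: derivative_eq_intros DERIV_chain2[where f = f, OF f_deriv])
    show "continuous_on {0..S} F"
      using dF by (intro continuous_on_if_derivatives[where f' = "\<lambda>s. h (m - s) + h (m + s) - 2 * C"]) auto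
    show "\<exists>D. (F has_real_derivative D) (at s) \<and> D \<ge> 0" if "0 < s" "s < S" for s
    proof -
      have "h (m + S) * h (m - S) \<le> h (m + s) * h (m - s)"
        by (rule log_concave_symmetric_product_antimono[where h' = h'])
          (use that h_deriv log_concave in \<open>auto simp: a b\<close>)
      then have "C \<le> sqrt (h (m + s) * h (m - s))"
        unfolding C_def a b by (simp add: mult.commute)
      also have "\<dots> \<le> (h (m + s) + h (m - s)) / 2"
        using that a b by (intro arith_geo_mean_sqrt h_nonneg) auto
      finally show ?thesis using dF[of s] that by auto
    qed
  qed (use \<open>S \<ge> 0\<close> in simp)
  then show ?thesis by (simp add: F_def C_def a b algebra_simps)
qed

section \<open>The normalized Bessel series\<close>

definition normBessel_coeff :: "real \<Rightarrow> nat \<Rightarrow> real" where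
  "normBessel_coeff nu n = (-1/4) ^ n / (pochhammer (nu + 1) n * fact n)"

lemma normBessel_eq_suminf: "normBessel nu x = (\<Sum>n. normBessel_coeff nu n * (x\<^sup>2) ^ n)"
  unfolding normBessel_def normBessel_coeff_def by (simp add: power_mult)

lemma pochhammer_ge_min_1:
  fixes t :: real
  assumes "t > 0"
  shows "pochhammer t n \<ge> min t 1"
proof (induction n)
  case 0
  then show ?case by simp
next
  case (Suc n)
  show ?case
  proof (cases n)
    case 0
    then show ?thesis by simp
  next
    case (Suc m)
    have "pochhammer t n * 1 \<le> pochhammer t n * (t + real n)"
      using Suc.IH assms \<open>n = Suc m\<close> by (intro mult_left_mono) auto
    with Suc.IH show ?thesis by (simp add: pochhammer_Suc)
  qed
qed

lemma summable_normBessel_coeff: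
  assumes "nu > -1"
  shows "summable (\<lambda>n. normBessel_coeff nu n * y ^ n)"
proof (rule summable_comparison_test')
  let ?m = "min (nu + 1) 1"
  have m: "?m > 0" using assms by simp
  show "summable (\<lambda>n. inverse (fact n) * (\<bar>y\<bar> / 4) ^ n / ?m)"
    by (intro summable_divide summable_exp)
  show "norm (normBessel_coeff nu n * y ^ n) \<le> inverse (fact n) * (\<bar>y\<bar> / 4) ^ n / ?m" for n
  proof -
    have p: "pochhammer (nu + 1) n \<ge> ?m" using pochhammer_ge_min_1 assms by simp
    have "norm (normBessel_coeff nu n * y ^ n) = (\<bar>y\<bar> / 4) ^ n / (pochhammer (nu + 1) n * fact n)"
      using p m unfolding normBessel_coeff_def
      by (simp add: abs_mult power_abs abs_divide power_divide abs_of_pos)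
    also have "\<dots> \<le> (\<bar>y\<bar> / 4) ^ n / (?m * fact n)"
      using p m by (intro divide_left_mono mult_right_mono mult_pos_pos) auto
    finally show ?thesis by (simp add: field_simps)
  qed
qed

lemma normBessel_coeff_Suc:
  assumes "nu > -1"
  shows "normBessel_coeff nu (Suc n) = - normBessel_coeff (nu + 1) n / (4 * (nu + 1) * (n + 1))"
  using assms unfolding normBessel_coeff_def pochhammer_rec fact_Suc
  by (simp add: field_simps add.assoc)

lemma normBessel_coeff_shift:
  assumes "nu > -1"
  shows "(nu + 1) * normBessel_coeff nu n = (nu + 1 + n) * normBessel_coeff (nu + 1) n"
proof -
  have rec: "pochhammer (nu + 1 + 1) n = pochhammer (nu + 1) n * (nu + 1 + n) / (nu + 1)"
    using pochhammer_rec[of "nu + 1" n] pochhammer_Suc[of "nu + 1" n] assms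
    by (simp add: add_ac field_simps)
  have "pochhammer (nu + 1) n \<noteq> 0" "nu + 1 + n \<noteq> 0" "nu + 1 \<noteq> 0"
    using assms pochhammer_pos[of "nu + 1" n] by auto
  then show ?thesis
    unfolding normBessel_coeff_def rec by simp
qed

lemma has_real_derivative_normBessel:
  assumes "nu > -1"
  shows "(normBessel nu has_real_derivative - x / (2 * (nu + 1)) * normBessel (nu + 1) x) (at x)"
proof -
  define F where "F mu y = (\<Sum>n. normBessel_coeff mu n * y ^ n)" for mu y :: real
  have diffs: "diffs (normBessel_coeff nu) n = - normBessel_coeff (nu + 1) n / (4 * (nu + 1))" for n
    using assms unfolding diffs_def normBessel_coeff_Suc[OF assms] by simp
  have "(F nu has_real_derivative (\<Sum>n. diffs (normBessel_coeff nu) n * y ^ n)) (at y)" for y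
    unfolding F_def by (rule termdiffs_strong_converges_everywhere[OF summable_normBessel_coeff[OF assms]])
  moreover have "(\<Sum>n. diffs (normBessel_coeff nu) n * y ^ n) = - F (nu + 1) y / (4 * (nu + 1))" for y
    unfolding diffs F_def using summable_normBessel_coeff[of "nu + 1" y] assms
    by (simp add: suminf_divide[symmetric] suminf_minus[symmetric] summable_minus summable_divide)
  ultimately have dF: "(F nu has_real_derivative - F (nu + 1) y / (4 * (nu + 1))) (at y)" for y
    by simp
  have "((\<lambda>x. F nu (x\<^sup>2)) has_real_derivative - F (nu + 1) (x\<^sup>2) / (4 * (nu + 1)) * (2 * x)) (at x)"
    by (rule DERIV_chain2[OF dF]) (auto intro!: derivative_eq_intros)
  moreover have "- F (nu + 1) (x\<^sup>2) / (4 * (nu + 1)) * (2 * x) = - x / (2 * (nu + 1)) * F (nu + 1) (x\<^sup>2)"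
    by (simp add: divide_simps)
  moreover have "normBessel mu = (\<lambda>x. F mu (x\<^sup>2))" for mu
    unfolding F_def by (simp add: normBessel_eq_suminf fun_eq_iff)
  ultimately show ?thesis by metis
qed

lemma normBessel_0 [simp]: "normBessel nu 0 = 1"
  using powser_zero[of "normBessel_coeff nu"] by (simp add: normBessel_eq_suminf normBessel_coeff_def)

lemma normBessel_contiguous:
  assumes "nu > -1"
  shows "normBessel nu x
           = normBessel (nu + 1) x - x\<^sup>2 / (4 * (nu + 1) * (nu + 2)) * normBessel (nu + 2) x"
proof -
  let ?c = normBessel_coeff and ?y = "x\<^sup>2"
  have coeff: "?c nu (Suc n) - ?c (nu + 1) (Suc n) = - ?c (nu + 2) n / (4 * (nu + 1) * (nu + 2))"
    for n
  proof -
    have "?c nu (Suc n) - ?c (nu + 1) (Suc n) = (n + 1) / (nu + 1) * ?c (nu + 1) (Suc n)"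
      using normBessel_coeff_shift[OF assms, of "Suc n"] assms by (simp add: field_simps)
    also have "\<dots> = - ?c (nu + 2) n / (4 * (nu + 1) * (nu + 2))"
      using assms by (subst normBessel_coeff_Suc) (simp_all add: add.assoc divide_simps, simp add: algebra_simps)
    finally show ?thesis .
  qed
  have summable: "summable (\<lambda>n. ?c mu n * ?y ^ n)" if "mu > -1" for mu
    using summable_normBessel_coeff[OF that] .
  have "normBessel nu x - normBessel (nu + 1) x = (\<Sum>n. (?c nu n - ?c (nu + 1) n) * ?y ^ n)"
    unfolding normBessel_eq_suminf left_diff_distrib
    using assms by (intro suminf_diff summable) auto
  also have "\<dots> = (\<Sum>n. (?c nu (Suc n) - ?c (nu + 1) (Suc n)) * ?y ^ Suc n)"
  proof -
    have "summable (\<lambda>n. (?c nu n - ?c (nu + 1) n) * ?y ^ n)"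
      unfolding left_diff_distrib using assms by (intro summable_diff summable) auto
    from suminf_split_head[OF this] show ?thesis by (simp add: normBessel_coeff_def)
  qed
  also have "\<dots> = (\<Sum>n. - ?y / (4 * (nu + 1) * (nu + 2)) * (?c (nu + 2) n * ?y ^ n))"
    unfolding coeff by (simp add: field_simps)
  also have "\<dots> = - ?y / (4 * (nu + 1) * (nu + 2)) * normBessel (nu + 2) x"
    unfolding normBessel_eq_suminf using assms by (intro suminf_mult summable) auto
  finally show ?thesis by simp
qed

lemma has_real_derivative_normBessel_plus_one:
  assumes "nu > -1" "x \<noteq> 0"
  shows "(normBessel (nu + 1) has_real_derivative
           2 * (nu + 1) * (normBessel nu x - normBessel (nu + 1) x) / x) (at x)"
proof -
  have "- x / (2 * (nu + 1 + 1)) * normBessel (nu + 1 + 1) x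
          = 2 * (nu + 1) * (normBessel nu x - normBessel (nu + 1) x) / x"
    using normBessel_contiguous[OF assms(1), of x] assms
    by (simp add: add.assoc divide_simps power2_eq_square) (simp add: algebra_simps)
  with has_real_derivative_normBessel[of "nu + 1" x] assms(1) show ?thesis by simp
qed

lemma isCont_normBessel: "nu > -1 \<Longrightarrow> isCont (normBessel nu) x"
  using has_real_derivative_normBessel DERIV_isCont by blast

lemma besselJ_eq_normBessel:
  assumes "nu > -1" "x > 0"
  shows "besselJ nu x = (x / 2) powr nu / Gamma (nu + 1) * normBessel nu x"
proof -
  define C where "C = (x / 2) powr nu / Gamma (nu + 1)"
  have summand: "(-1) ^ n / (fact n * Gamma (real n + nu + 1)) * (x / 2) powr (2 * real n + nu)
                = C * (normBessel_coeff nu n * (x\<^sup>2) ^ n)" for n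
  proof -
    have G: "Gamma (nu + 1) > 0"
      using assms(1) by (intro Gamma_real_pos) simp
    have "nu + 1 \<notin> \<int>\<^sub>\<le>\<^sub>0"
      using assms(1) by (auto elim!: nonpos_Ints_cases)
    then have "pochhammer (nu + 1) n * Gamma (nu + 1) = Gamma (nu + 1 + n)"
      using G by (simp add: pochhammer_Gamma)
    then have Gamma: "Gamma (real n + nu + 1) = Gamma (nu + 1) * pochhammer (nu + 1) n"
      by (simp add: ac_simps)
    have powr_split: "(x / 2) powr (2 * real n + nu) = (x\<^sup>2) ^ n / 4 ^ n * (x / 2) powr nu"
    proof -
      have "(x / 2) powr (2 * real n + nu) = (x / 2) ^ (2 * n) * (x / 2) powr nu"
        using assms(2) by (simp add: powr_add powr_realpow[symmetric])
      also have "(x / 2) ^ (2 * n) = (x\<^sup>2) ^ n / 4 ^ n"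
        by (simp add: power_mult power_divide)
      finally show ?thesis .
    qed
    have "(-1/4::real) ^ n = (-1) ^ n / 4 ^ n"
      by (induct n) simp_all
    moreover have "pochhammer (nu + 1) n > 0"
      using assms(1) by (intro pochhammer_pos) simp
    ultimately show ?thesis
      using G unfolding Gamma powr_split C_def normBessel_coeff_def by (simp add: field_simps)
  qed
  have "besselJ nu x = (\<Sum>n. C * (normBessel_coeff nu n * (x\<^sup>2) ^ n))"
    unfolding besselJ_def summand ..
  also have "\<dots> = C * normBessel nu x"
    unfolding normBessel_eq_suminf using summable_normBessel_coeff[OF assms(1)] by (rule suminf_mult)
  finally show ?thesis unfolding C_def .
qed

lemma normBessel_nonzero_before_first_zero:
  assumes "nu > -1" "0 < x" "x < first_bessel_zero nu"
  shows "normBessel nu x \<noteq> 0"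
proof
  assume "normBessel nu x = 0"
  then have "x \<in> {x. x > 0 \<and> besselJ nu x = 0}"
    using besselJ_eq_normBessel[OF assms(1,2)] assms(2) by simp
  moreover have "bdd_below {x. x > 0 \<and> besselJ nu x = 0}"
    by (rule bdd_belowI[of _ 0]) auto
  ultimately have "first_bessel_zero nu \<le> x"
    unfolding first_bessel_zero_def by (rule cInf_lower)
  with assms(3) show False by simp
qed

lemma normBessel_nonneg_upto_first_zero:
  assumes "nu > -1" "0 \<le> x" "x \<le> first_bessel_zero nu"
  shows "normBessel nu x \<ge> 0"
proof (rule nonneg_if_no_root_before[of 0 x "normBessel nu"])
  show "continuous_on {0..x} (normBessel nu)"
    using isCont_normBessel[OF assms(1)] by (intro continuous_at_imp_continuous_on) blast
  show "normBessel nu z \<noteq> 0" if "0 < z" "z < x" for z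
    using normBessel_nonzero_before_first_zero[OF assms(1) that(1)] that assms(3) by simp
qed (use assms(2) in simp_all)

lemma normBessel_pos_before_first_zero:
  assumes "nu > -1" "0 \<le> x" "x < first_bessel_zero nu"
  shows "normBessel nu x > 0"
proof (cases "x = 0")
  case False
  with assms have "normBessel nu x \<noteq> 0" "normBessel nu x \<ge> 0"
    using normBessel_nonzero_before_first_zero normBessel_nonneg_upto_first_zero by simp_all
  then show ?thesis by simp
qed simp

section \<open>Bessel inequalities below the first zero\<close>

lemma normBessel_plus_one_nonneg_upto_first_zero:
  assumes "nu > -1" "0 \<le> x" "x \<le> first_bessel_zero nu"
  shows "normBessel (nu + 1) x \<ge> 0"
proof (cases "x = 0")
  case False
  let ?u = "normBessel nu" and ?w = "normBessel (nu + 1)"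
  show ?thesis
  proof (rule nonneg_if_powr_weighted_increasing
      [where q = "2 * nu + 2" and G = ?w and x = x and D = "\<lambda>s. (2 * nu + 2) * s powr (2 * nu + 1) * ?u s"])
    show "((\<lambda>s. s powr (2 * nu + 2) * ?w s) has_real_derivative
            (2 * nu + 2) * s powr (2 * nu + 1) * ?u s) (at s)" if "0 < s" for s
    proof -
      have "s powr (2 * nu + 2) = s powr (2 * nu + 1) * s"
        using powr_add[of s "2 * nu + 1" 1] that by (simp add: add.commute)
      then show ?thesis
        using that assms(1)
        by (intro DERIV_cong[OF DERIV_mult[OF has_real_derivative_powr has_real_derivative_normBessel_plus_one]])
          (auto simp: field_simps add.assoc)
    qed
    show "(2 * nu + 2) * s powr (2 * nu + 1) * ?u s \<ge> 0" if "0 < s" "s < x" for s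
      using normBessel_pos_before_first_zero[of nu s] that assms by simp
  qed (use assms False isCont_normBessel in auto)
qed simp

lemma normBessel_turan_type:
  assumes "nu > -1/2" "0 \<le> x" "x \<le> first_bessel_zero nu"
  defines "c \<equiv> 1 / (2 * (nu + 1))"
  shows "(1 - c) * normBessel nu x * normBessel (nu + 1) x
           \<le> (normBessel nu x)\<^sup>2 + c\<^sup>2 * x\<^sup>2 * (normBessel (nu + 1) x)\<^sup>2"
proof (cases "x = 0")
  case False
  let ?u = "normBessel nu" and ?w = "normBessel (nu + 1)"
  have nu: "nu > -1" and c: "0 < c" "c < 1"
    using assms(1) unfolding c_def by (simp_all add: field_simps)
  define G where "G = (\<lambda>s. (?u s)\<^sup>2 + c\<^sup>2 * s\<^sup>2 * (?w s)\<^sup>2 - (1 - c) * ?u s * ?w s)"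
  have "G x \<ge> 0"
  proof (rule nonneg_if_powr_weighted_increasing
      [where q = "2 * nu + 1" and G = G and x = x and D = "\<lambda>s. (1 - c) * s powr (2 * nu) * ?u s * ?w s"])
    show "((\<lambda>s. s powr (2 * nu + 1) * G s) has_real_derivative
            (1 - c) * s powr (2 * nu) * ?u s * ?w s) (at s)" if "0 < s" for s
    proof -
      have du: "(?u has_real_derivative - c * s * ?w s) (at s)"
        using has_real_derivative_normBessel[OF nu, of s] by (simp add: c_def)
      have dw: "(?w has_real_derivative (?u s - ?w s) / (c * s)) (at s)"
        using has_real_derivative_normBessel_plus_one[OF nu, of s] that c by (simp add: c_def ac_simps)
      have dG: "(G has_real_derivative (1 - c) * ?u s * ?w s / s - (1 - c) / c * G s / s) (at s)"
        unfolding G_def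
        by (rule DERIV_cong, (rule derivative_eq_intros du dw | simp)+)
          (use that c in \<open>simp add: field_simps power2_eq_square\<close>)
      have exponent_pred: "s powr (2 * nu + 1 - 1) = s powr (2 * nu)" by simp
      have powr_split: "s powr (2 * nu + 1) = s powr (2 * nu) * s"
        using powr_add[of s "2 * nu" 1] that by simp
      have exponent: "2 * nu + 1 = (1 - c) / c"
        using nu unfolding c_def by (simp add: field_simps)
      have eq: "(2 * nu + 1) * s powr (2 * nu + 1 - 1) * G s
          + ((1 - c) * ?u s * ?w s / s - (1 - c) / c * G s / s) * s powr (2 * nu + 1)
          = (1 - c) * s powr (2 * nu) * ?u s * ?w s"
        using that c unfolding exponent_pred powr_split unfolding exponent by (simp add: field_simps)
      show ?thesis
        by (rule DERIV_cong[OF DERIV_mult[OF has_real_derivative_powr[OF that] dG] eq])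
    qed
    show "(1 - c) * s powr (2 * nu) * ?u s * ?w s \<ge> 0" if "0 < s" "s < x" for s
      using normBessel_pos_before_first_zero[OF nu, of s] normBessel_plus_one_nonneg_upto_first_zero[OF nu, of s]
        that assms(3) c by simp
    show "isCont G 0"
      unfolding G_def using nu by (intro continuous_intros isCont_normBessel) auto
  qed (use assms(1,2) False in auto)
  then show ?thesis unfolding G_def by simp
qed (use assms(1) in \<open>simp add: c_def\<close>)

lemma normBessel_ratio_mono:
  assumes "nu > -1/2" "0 < y" "y \<le> x" "x < first_bessel_zero nu"
  shows "y * normBessel (nu + 1) y / normBessel nu y \<le> x * normBessel (nu + 1) x / normBessel nu x"
proof -
  let ?u = "normBessel nu" and ?w = "normBessel (nu + 1)"
  define c where "c = 1 / (2 * (nu + 1))"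
  have nu: "nu > -1" and c: "c > 0"
    using assms(1) unfolding c_def by simp_all
  define r where "r = (\<lambda>s. s * ?w s / ?u s)"
  define r' where "r' = (\<lambda>s. ((?u s)\<^sup>2 + c\<^sup>2 * s\<^sup>2 * (?w s)\<^sup>2 - (1 - c) * ?u s * ?w s) / (c * (?u s)\<^sup>2))"
  have dr: "(r has_real_derivative r' s) (at s)" if "0 < s" "s < first_bessel_zero nu" for s
  proof -
    have u: "?u s > 0"
      using normBessel_pos_before_first_zero[OF nu] that by simp
    have du: "(?u has_real_derivative - c * s * ?w s) (at s)"
      using has_real_derivative_normBessel[OF nu, of s] by (simp add: c_def)
    have dw: "(?w has_real_derivative (?u s - ?w s) / (c * s)) (at s)"
      using has_real_derivative_normBessel_plus_one[OF nu, of s] that c by (simp add: c_def ac_simps)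
    show ?thesis
      unfolding r_def r'_def
      by (rule DERIV_cong, (rule derivative_eq_intros du dw | simp add: u less_imp_neq[symmetric])+)
        (use that c u in \<open>simp add: field_simps power2_eq_square\<close>)
  qed
  have "r y \<le> r x"
  proof (rule DERIV_nonneg_imp_increasing_open[of y x r])
    show "continuous_on {y..x} r"
      using dr assms by (intro continuous_on_if_derivatives[where f' = r']) auto
    show "\<exists>D. (r has_real_derivative D) (at s) \<and> D \<ge> 0" if "y < s" "s < x" for s
    proof -
      have "(1 - c) * ?u s * ?w s \<le> (?u s)\<^sup>2 + c\<^sup>2 * s\<^sup>2 * (?w s)\<^sup>2"
        unfolding c_def using normBessel_turan_type[OF assms(1)] that assms by simp
      then have "r' s \<ge> 0"
        unfolding r'_def using c by (intro divide_nonneg_nonneg) auto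
      then show ?thesis using dr[of s] that assms by auto
    qed
  qed (use assms in simp)
  then show ?thesis unfolding r_def .
qed

lemma x_normBessel_log_concave:
  assumes "nu > -1/2" "0 < y" "y \<le> x" "x < first_bessel_zero nu"
  defines "c \<equiv> 1 / (2 * (nu + 1))"
  shows "(normBessel nu x - c * x\<^sup>2 * normBessel (nu + 1) x) * (y * normBessel nu y)
           \<le> (x * normBessel nu x) * (normBessel nu y - c * y\<^sup>2 * normBessel (nu + 1) y)"
proof -
  let ?u = "normBessel nu" and ?w = "normBessel (nu + 1)"
  have "c > 0" using assms(1) unfolding c_def by simp
  have u: "?u x > 0" "?u y > 0"
    using normBessel_pos_before_first_zero[of nu] assms by simp_all
  have "y * ?w y * ?u x \<le> x * ?w x * ?u y"
    using normBessel_ratio_mono[OF assms(1-4)] u by (simp add: divide_simps)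
  then have "c * x * y * (y * ?w y * ?u x) \<le> c * x * y * (x * ?w x * ?u y)"
    using \<open>c > 0\<close> assms(2,3) by (intro mult_left_mono) auto
  moreover have "y * (?u x * ?u y) \<le> x * (?u x * ?u y)"
    using assms(3) u by (intro mult_right_mono) auto
  ultimately show ?thesis
    by (simp add: algebra_simps power2_eq_square)
qed

lemma normBessel_decrease_lower_bound:
  assumes "nu > -1" "0 \<le> a" "a \<le> b" "b \<le> first_bessel_zero (nu + 1)"
  shows "(b - a) * sqrt (deriv (normBessel nu) a * deriv (normBessel nu) b)
           \<le> normBessel nu a - normBessel nu b"
proof -
  let ?w = "normBessel (nu + 1)" and ?z = "normBessel (nu + 2)"
  define k where "k = 1 / (2 * (nu + 1))"
  define h where "h = (\<lambda>x. k * (x * ?w x))"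
  define h' where "h' = (\<lambda>x. k * (?w x - x\<^sup>2 / (2 * (nu + 2)) * ?z x))"
  have "k > 0" using assms(1) unfolding k_def by simp
  have f_deriv: "(normBessel nu has_real_derivative - h x) (at x)" for x
    using has_real_derivative_normBessel[OF assms(1), of x] by (simp add: h_def k_def)
  have "(b - a) * sqrt (h a * h b) \<le> normBessel nu a - normBessel nu b"
  proof (rule decrease_ge_geometric_mean_of_log_concave_slope[where h' = h'])
    show "(h has_real_derivative h' x) (at x)" for x
      using has_real_derivative_normBessel[of "nu + 1" x] assms(1)
      unfolding h_def h'_def
      by (auto intro!: derivative_eq_intros simp: add.assoc field_simps power2_eq_square)
    show "h x \<ge> 0" if "a \<le> x" "x \<le> b" for x
      using normBessel_nonneg_upto_first_zero[of "nu + 1" x] that assms \<open>k > 0\<close>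
      unfolding h_def by simp
    show "h' x * h y \<le> h x * h' y" if "a < y" "y \<le> x" "x < b" for x y
    proof -
      have "(?w x - x\<^sup>2 / (2 * (nu + 2)) * ?z x) * (y * ?w y)
              \<le> (x * ?w x) * (?w y - y\<^sup>2 / (2 * (nu + 2)) * ?z y)"
        using x_normBessel_log_concave[of "nu + 1" y x] that assms by (simp add: add.assoc)
      then have "k * k * ((?w x - x\<^sup>2 / (2 * (nu + 2)) * ?z x) * (y * ?w y))
                   \<le> k * k * ((x * ?w x) * (?w y - y\<^sup>2 / (2 * (nu + 2)) * ?z y))"
        by (rule mult_left_mono) simp
      then show ?thesis
        unfolding h_def h'_def by (simp only: ac_simps)
    qed
  qed (use assms f_deriv in simp_all)
  moreover have "deriv (normBessel nu) x = - h x" for x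
    using f_deriv by (rule DERIV_imp_deriv)
  ultimately show ?thesis by simp
qed

theorem corollary2:
  fixes nu a b :: real
  assumes "nu > -1"
    and "a \<in> {0..first_bessel_zero (nu + 1)}"
    and "b \<in> {0..first_bessel_zero (nu + 1)}"
  shows "\<bar>normBessel nu a - normBessel nu b\<bar>
           \<ge> \<bar>a - b\<bar> * sqrt (deriv (normBessel nu) a * deriv (normBessel nu) b)"
proof (cases "a \<le> b")
  case True
  then show ?thesis
    using normBessel_decrease_lower_bound[OF assms(1), of a b] assms(2,3) by simp
next
  case False
  then show ?thesis
    using normBessel_decrease_lower_bound[OF assms(1), of b a] assms(2,3) by (simp add: mult.commute)
qed

end
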